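(* Let $\ell\ge2$, $r_0,\dots,r_\ell\ge1$ integers, $d_0,\dots,d_\ell$ integers with $d_V=\sum_kd_k=0$, and $\mathbf{g}\ge1$ an integer. Then, as $c\to+\infty$, the quantity $\mathring{\mathfrak{F}}(c)$ defined in the context has an asymptotic expansion $$\mathring{\mathfrak{F}}(c)=(\mu_0-\mu_1)\Big(Fut_1\,c+Fut_2+\frac{Fut_3}{c}+\frac{Fut_4}{c^2}+\cdots\Big),$$ where the real coefficients $Fut_i$ depend only on the $r_k$, $d_k$ and $\mathbf{g}$, and $$Fut_1=\frac{2\pi_R^2r_Vr_0r_1}{(r_V-1)!(r_V+1)!(r_0+r_1)}>0,\qquad Fut_2=\frac{2r_0r_1\pi_R^2}{(r_V-1)!(r_V+2)!(r_0+r_1)}\big[(r_V+2)(\mathbf{g}-1)+2r_V\mu_{01}\big],$$ with $\mu_{01}=\frac{d_0+d_1}{r_0+r_1}$.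
   Context: $\mu_k=d_k/r_k$, $r_V=\sum_kr_k$, $\pi_R=\prod_k(r_k-1)!$, $c$ real with $c>\max_k\mu_k$. For $1\le j\ne k\le\ell$: $\alpha_0=\frac{\pi_R}{r_V!}(cr_V-d_V)$, $\alpha_j=\frac{\pi_R}{(r_V+1)!}r_j(c(r_V+1)-d_V-\mu_j)$, $\alpha_{jk}=\frac{\pi_R}{(r_V+2)!}r_jr_k(c(r_V+2)-d_V-\mu_j-\mu_k)$, $\alpha_{jj}=\frac{\pi_R}{(r_V+2)!}r_j(r_j+1)(c(r_V+2)-d_V-2\mu_j)$, $\beta_0=\frac{\pi_R}{(r_V-1)!}((r_V-1)r_Vc+2(1-\mathbf{g})-(r_V-1)d_V)$, $\beta_j=\frac{\pi_Rr_j}{r_V!}(r_V(r_V-1)c+2(1-\mathbf{g})-d_V(r_V-2)-r_V\mu_j)$. $A$ is the $(\ell-1)\times(\ell-1)$ matrix $A_{ij}=\alpha_{ij}-\alpha_i\alpha_j/\alpha_0$, $2\le i,j\le\ell$ (invertible for $c>\max\mu_k$), and $\mathring{\mathfrak{F}}(c)=(\alpha_0\beta_1-\alpha_1\beta_0)-\sum_{j,r=2}^\ell(A^{-1})_{rj}(\alpha_0\beta_r-\alpha_r\beta_0)\big(\alpha_{j1}-\frac{\alpha_1\alpha_j}{\alpha_0}\big)$. *)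

theory Defs
  imports Complex_Main "HOL-Library.Landau_Symbols" "Jordan_Normal_Form.Gauss_Jordan_Elimination"
begin

definition mu :: "(nat \<Rightarrow> nat) \<Rightarrow> (nat \<Rightarrow> int) \<Rightarrow> nat \<Rightarrow> real" where
  "mu r d k = real_of_int (d k) / real (r k)"

definition rV :: "nat \<Rightarrow> (nat \<Rightarrow> nat) \<Rightarrow> nat" where
  "rV l r = (\<Sum>k\<le>l. r k)"

definition dV :: "nat \<Rightarrow> (nat \<Rightarrow> int) \<Rightarrow> real" where
  "dV l d = real_of_int (\<Sum>k\<le>l. d k)"

definition piR :: "nat \<Rightarrow> (nat \<Rightarrow> nat) \<Rightarrow> real" where
  "piR l r = (\<Prod>k\<le>l. fact (r k - 1))"

definition alpha0 :: "nat \<Rightarrow> (nat \<Rightarrow> nat) \<Rightarrow> (nat \<Rightarrow> int) \<Rightarrow> real \<Rightarrow> real" where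
  "alpha0 l r d c = piR l r / fact (rV l r) * (c * real (rV l r) - dV l d)"

definition alpha1 :: "nat \<Rightarrow> (nat \<Rightarrow> nat) \<Rightarrow> (nat \<Rightarrow> int) \<Rightarrow> real \<Rightarrow> nat \<Rightarrow> real" where
  "alpha1 l r d c j = piR l r / fact (rV l r + 1) * real (r j)
     * (c * (real (rV l r) + 1) - dV l d - mu r d j)"

definition alpha2 :: "nat \<Rightarrow> (nat \<Rightarrow> nat) \<Rightarrow> (nat \<Rightarrow> int) \<Rightarrow> real \<Rightarrow> nat \<Rightarrow> nat \<Rightarrow> real" where
  "alpha2 l r d c j k =
     (if j = k then piR l r / fact (rV l r + 2) * real (r j) * (real (r j) + 1)
                      * (c * (real (rV l r) + 2) - dV l d - 2 * mu r d j)
      else piR l r / fact (rV l r + 2) * real (r j) * real (r k)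
                      * (c * (real (rV l r) + 2) - dV l d - mu r d j - mu r d k))"

definition beta0 :: "nat \<Rightarrow> (nat \<Rightarrow> nat) \<Rightarrow> (nat \<Rightarrow> int) \<Rightarrow> int \<Rightarrow> real \<Rightarrow> real" where
  "beta0 l r d g c = piR l r / fact (rV l r - 1)
     * ((real (rV l r) - 1) * real (rV l r) * c + 2 * (1 - real_of_int g)
        - (real (rV l r) - 1) * dV l d)"

definition beta1 :: "nat \<Rightarrow> (nat \<Rightarrow> nat) \<Rightarrow> (nat \<Rightarrow> int) \<Rightarrow> int \<Rightarrow> real \<Rightarrow> nat \<Rightarrow> real" where
  "beta1 l r d g c j = piR l r * real (r j) / fact (rV l r)
     * (real (rV l r) * (real (rV l r) - 1) * c + 2 * (1 - real_of_int g)
        - dV l d * (real (rV l r) - 2) - real (rV l r) * mu r d j)"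

text \<open>The (l-1)x(l-1) matrix A, with row/column index i (0-based) standing for vertex i+2.\<close>
definition Amat :: "nat \<Rightarrow> (nat \<Rightarrow> nat) \<Rightarrow> (nat \<Rightarrow> int) \<Rightarrow> real \<Rightarrow> real mat" where
  "Amat l r d c = mat (l - 1) (l - 1) (\<lambda>(i, j).
      alpha2 l r d c (i + 2) (j + 2)
      - alpha1 l r d c (i + 2) * alpha1 l r d c (j + 2) / alpha0 l r d c)"

definition Fring :: "nat \<Rightarrow> (nat \<Rightarrow> nat) \<Rightarrow> (nat \<Rightarrow> int) \<Rightarrow> int \<Rightarrow> real \<Rightarrow> real" where
  "Fring l r d g c =
     (let a0 = alpha0 l r d c; b0 = beta0 l r d g c;
          a = alpha1 l r d c; b = beta1 l r d g c; Ainv = the (mat_inverse (Amat l r d c))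
      in (a0 * b 1 - a 1 * b0)
         - (\<Sum>j\<in>{2..l}. \<Sum>s\<in>{2..l}. Ainv $$ (s - 2, j - 2) * (a0 * b s - a s * b0)
                 * (alpha2 l r d c j 1 - a 1 * a j / a0)))"

end

theory Submission
  imports Defs "HOL-Analysis.FPS_Convergence" "Jordan_Normal_Form.Determinant"
begin

unbundle no vec_syntax

text \<open>Since \<open>d\<^sub>V = 0\<close>, all the \<open>\<alpha>\<close>'s and \<open>\<beta>\<close>'s are explicit in the weights
  \<open>w\<^sub>j = (r\<^sub>V + 2) c - 2 \<mu>\<^sub>j\<close>: one has \<open>\<alpha>\<^sub>0 \<beta>\<^sub>k - \<alpha>\<^sub>k \<beta>\<^sub>0 = \<gamma>(c) d\<^sub>k\<close>, and \<open>A\<close> is a diagonal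
  matrix plus a rank-two term, \<open>A\<^sub>i\<^sub>j = \<kappa> r\<^sub>i (\<delta>\<^sub>i\<^sub>j w\<^sub>i + r\<^sub>j B(w\<^sub>i, w\<^sub>j))\<close> with \<open>B\<close> a bilinear form in
  \<open>(1, w)\<close>. Hence \<open>A\<^sup>-\<^sup>1\<close> maps the column \<open>(A\<^sub>j\<^sub>1)\<close> to a vector \<open>\<alpha> + \<beta> / w\<^sub>j\<close> whose two
  parameters solve a \<open>2 \<times> 2\<close> system for the moments \<open>\<Sum> r\<^sub>j y\<^sub>j\<close> and \<open>\<Sum> r\<^sub>j w\<^sub>j y\<^sub>j\<close>.
  Cramer's rule and two polynomial identities then give \<open>F(c) = (\<mu>\<^sub>0 - \<mu>\<^sub>1) c H(1/c)\<close> for a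
  function \<open>H\<close> that is analytic at \<open>0\<close>, so the expansion is the Taylor expansion of \<open>H\<close>;
  its first two coefficients come from the power series of numerator and denominator.\<close>

section \<open>Diagonal matrices perturbed by a rank-two term\<close>

lemma cramer_2x2:
  fixes a11 a12 a21 a22 e1 e2 x y :: "'a::field"
  assumes "a11 * a22 - a12 * a21 \<noteq> 0"
  shows "a11 * x + a12 * y = e1 \<and> a21 * x + a22 * y = e2 \<longleftrightarrow>
    x = (e1 * a22 - a12 * e2) / (a11 * a22 - a12 * a21) \<and>
    y = (a11 * e2 - a21 * e1) / (a11 * a22 - a12 * a21)"
proof -
  define D where "D = a11 * a22 - a12 * a21"
  have "a11 * x + a12 * y = e1 \<and> a21 * x + a22 * y = e2 \<longleftrightarrow>
      D * x = e1 * a22 - a12 * e2 \<and> D * y = a11 * e2 - a21 * e1"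
  proof
    assume "a11 * x + a12 * y = e1 \<and> a21 * x + a22 * y = e2"
    then show "D * x = e1 * a22 - a12 * e2 \<and> D * y = a11 * e2 - a21 * e1"
      by (auto simp: D_def algebra_simps)
  next
    assume xy: "D * x = e1 * a22 - a12 * e2 \<and> D * y = a11 * e2 - a21 * e1"
    have "D * (a11 * x + a12 * y) = a11 * (D * x) + a12 * (D * y)"
      by (simp add: algebra_simps)
    also have "\<dots> = a11 * (e1 * a22 - a12 * e2) + a12 * (a11 * e2 - a21 * e1)"
      using xy by simp
    also have "\<dots> = D * e1"
      by (simp add: D_def algebra_simps)
    finally have eq1: "D * (a11 * x + a12 * y) = D * e1" .
    have "D * (a21 * x + a22 * y) = a21 * (D * x) + a22 * (D * y)"
      by (simp add: algebra_simps)
    also have "\<dots> = a21 * (e1 * a22 - a12 * e2) + a22 * (a11 * e2 - a21 * e1)"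
      using xy by simp
    also have "\<dots> = D * e2"
      by (simp add: D_def algebra_simps)
    finally have eq2: "D * (a21 * x + a22 * y) = D * e2" .
    from eq1 eq2 show "a11 * x + a12 * y = e1 \<and> a21 * x + a22 * y = e2"
      using assms by (simp add: D_def)
  qed
  also have "\<dots> \<longleftrightarrow> x = (e1 * a22 - a12 * e2) / D \<and> y = (a11 * e2 - a21 * e1) / D"
    using assms by (simp add: D_def field_simps)
  finally show ?thesis
    by (simp add: D_def)
qed

lemma mat_inverse_injective:
  fixes A :: "'a::field mat"
  assumes A: "A \<in> carrier_mat n n"
    and inj: "\<And>v. v \<in> carrier_vec n \<Longrightarrow> A *\<^sub>v v = 0\<^sub>v n \<Longrightarrow> v = 0\<^sub>v n"
  shows "the (mat_inverse A) \<in> carrier_mat n n" and "the (mat_inverse A) * A = 1\<^sub>m n"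
proof -
  have "det A \<noteq> 0"
    using inj det_0_iff_vec_prod_zero_field[OF A] by blast
  then have "A \<in> Units (ring_mat TYPE('a) n ())"
    by (rule det_non_zero_imp_unit[OF A])
  then obtain B where "mat_inverse A = Some B"
    using mat_inverse(1)[OF A, where b = "()"] by blast
  then show "the (mat_inverse A) \<in> carrier_mat n n" and "the (mat_inverse A) * A = 1\<^sub>m n"
    using mat_inverse(2)[OF A] by auto
qed

lemma mat_inverse_mult_vec:
  fixes A :: "'a::field mat"
  assumes A: "A \<in> carrier_mat n n"
    and inj: "\<And>v. v \<in> carrier_vec n \<Longrightarrow> A *\<^sub>v v = 0\<^sub>v n \<Longrightarrow> v = 0\<^sub>v n"
    and y: "y \<in> carrier_vec n" and Ay: "A *\<^sub>v y = b"
  shows "the (mat_inverse A) *\<^sub>v b = y"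
proof -
  have "the (mat_inverse A) *\<^sub>v b = (the (mat_inverse A) * A) *\<^sub>v y"
    using Ay assoc_mult_mat_vec[OF mat_inverse_injective(1)[OF A inj] A y] by simp
  then show ?thesis
    using mat_inverse_injective(2)[OF A inj] y by simp
qed

definition diag_rank_two_mat ::
    "nat \<Rightarrow> (nat \<Rightarrow> 'a) \<Rightarrow> (nat \<Rightarrow> 'a) \<Rightarrow> (nat \<Rightarrow> 'a) \<Rightarrow> 'a \<Rightarrow> 'a \<Rightarrow> 'a \<Rightarrow> 'a::field mat" where
  "diag_rank_two_mat m \<kappa> \<rho> w p q s = Matrix.mat m m (\<lambda>(i, j).
     \<kappa> i * ((if i = j then w i else 0) + \<rho> j * (p + q * (w i + w j) + s * w i * w j)))"

lemma diag_rank_two_mat_carrier: "diag_rank_two_mat m \<kappa> \<rho> w p q s \<in> carrier_mat m m"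
  by (simp add: diag_rank_two_mat_def)

lemma diag_rank_two_mult_vec:
  assumes "i < m"
  shows "(diag_rank_two_mat m \<kappa> \<rho> w p q s *\<^sub>v Matrix.vec m y) $ i = \<kappa> i * (w i * y i
    + (p + q * w i) * (\<Sum>j<m. \<rho> j * y j) + (q + s * w i) * (\<Sum>j<m. \<rho> j * w j * y j))"
proof -
  have "(diag_rank_two_mat m \<kappa> \<rho> w p q s *\<^sub>v Matrix.vec m y) $ i = \<kappa> i * (\<Sum>j<m. (if i = j then w i * y j else 0)
      + ((p + q * w i) * (\<rho> j * y j) + (q + s * w i) * (\<rho> j * w j * y j)))"
    using assms by (auto simp: diag_rank_two_mat_def scalar_prod_def lessThan_atLeast0 sum_distrib_left
        intro!: sum.cong) (simp_all add: algebra_simps)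
  then show ?thesis
    using assms by (simp add: sum.distrib sum_distrib_left add.assoc)
qed

lemma sum_affine_in_inverse:
  "(\<Sum>j<m. \<rho> j * (\<alpha> + \<beta> / w j)) = \<alpha> * (\<Sum>j<m. \<rho> j) + \<beta> * (\<Sum>j<m. \<rho> j / (w j :: 'a::field))"
proof -
  have "(\<Sum>j<m. \<rho> j * (\<alpha> + \<beta> / w j)) = (\<Sum>j<m. \<alpha> * \<rho> j + \<beta> * (\<rho> j / w j))"
    by (simp add: distrib_left mult.commute)
  then show ?thesis
    by (simp add: sum.distrib sum_distrib_left)
qed

lemma sum_weighted_affine_in_inverse:
  fixes \<rho> w :: "nat \<Rightarrow> 'a::field"
  assumes "\<And>j. j < m \<Longrightarrow> w j \<noteq> 0"
  shows "(\<Sum>j<m. \<rho> j * w j * (\<alpha> + \<beta> / w j)) = \<alpha> * (\<Sum>j<m. \<rho> j * w j) + \<beta> * (\<Sum>j<m. \<rho> j)"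
proof -
  have "(\<Sum>j<m. \<rho> j * w j * (\<alpha> + \<beta> / w j)) = (\<Sum>j<m. \<alpha> * (\<rho> j * w j) + \<beta> * \<rho> j)"
    using assms by (intro sum.cong) (simp_all add: field_simps)
  then show ?thesis
    by (simp add: sum.distrib sum_distrib_left)
qed

text \<open>The matrix sees a vector \<open>v\<close> only through \<open>w\<^sub>j v\<^sub>j\<close> and the two moments \<open>\<Sum> \<rho>\<^sub>j v\<^sub>j\<close>,
  \<open>\<Sum> \<rho>\<^sub>j w\<^sub>j v\<^sub>j\<close>. Hence solutions have the form \<open>v\<^sub>j = \<alpha> + \<beta> / w\<^sub>j\<close>, and inverting the matrix
  reduces to the \<open>2 \<times> 2\<close> linear system below for the moments \<open>y, z\<close>.\<close>

lemma diag_rank_two_mult_vec_affine_in_inverse: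
  fixes m :: nat and \<rho> w \<kappa> :: "nat \<Rightarrow> 'a::field"
  defines "R \<equiv> \<Sum>j<m. \<rho> j" and "S \<equiv> \<Sum>j<m. \<rho> j / w j" and "P \<equiv> \<Sum>j<m. \<rho> j * w j"
  assumes w: "\<And>j. j < m \<Longrightarrow> w j \<noteq> 0"
    and y: "(1 + R * q + S * p) * y + (R * s + S * q) * z = R * b + S * a"
    and z: "(P * q + R * p) * y + (1 + P * s + R * q) * z = P * b + R * a"
  shows "diag_rank_two_mat m \<kappa> \<rho> w p q s *\<^sub>v Matrix.vec m (\<lambda>j. (b - q * y - s * z) + (a - p * y - q * z) / w j)
    = Matrix.vec m (\<lambda>i. \<kappa> i * (a + b * w i))"
proof -
  define \<alpha> where "\<alpha> = b - q * y - s * z"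
  define \<beta> where "\<beta> = a - p * y - q * z"
  have "(\<Sum>j<m. \<rho> j * (\<alpha> + \<beta> / w j)) = \<alpha> * R + \<beta> * S"
    unfolding R_def S_def by (rule sum_affine_in_inverse)
  also have "\<dots> = y"
    using y by (simp add: \<alpha>_def \<beta>_def algebra_simps eq_neg_iff_add_eq_0)
  finally have moment0: "(\<Sum>j<m. \<rho> j * (\<alpha> + \<beta> / w j)) = y" .
  have "(\<Sum>j<m. \<rho> j * w j * (\<alpha> + \<beta> / w j)) = \<alpha> * P + \<beta> * R"
    unfolding R_def P_def by (rule sum_weighted_affine_in_inverse[OF w])
  also have "\<dots> = z"
    using z by (simp add: \<alpha>_def \<beta>_def algebra_simps eq_neg_iff_add_eq_0)
  finally have moment1: "(\<Sum>j<m. \<rho> j * w j * (\<alpha> + \<beta> / w j)) = z" .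
  show ?thesis
    unfolding \<alpha>_def[symmetric] \<beta>_def[symmetric]
  proof (rule eq_vecI)
    fix i assume "i < dim_vec (Matrix.vec m (\<lambda>i. \<kappa> i * (a + b * w i)))"
    then have i: "i < m" by simp
    have wy: "w i * (\<alpha> + \<beta> / w i) = \<alpha> * w i + \<beta>"
      using w[OF i] by (simp add: field_simps)
    show "(diag_rank_two_mat m \<kappa> \<rho> w p q s *\<^sub>v Matrix.vec m (\<lambda>j. \<alpha> + \<beta> / w j)) $ i
        = Matrix.vec m (\<lambda>i. \<kappa> i * (a + b * w i)) $ i"
      using i unfolding diag_rank_two_mult_vec[OF i] moment0 moment1 wy
      by (simp add: \<alpha>_def \<beta>_def algebra_simps)
  qed (simp add: diag_rank_two_mat_def)
qed

definition rank_two_det :: "'a \<Rightarrow> 'a \<Rightarrow> 'a \<Rightarrow> 'a \<Rightarrow> 'a \<Rightarrow> 'a \<Rightarrow> 'a::field" where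
  "rank_two_det R S P p q s = (1 + R * q + S * p) * (1 + P * s + R * q) - (R * s + S * q) * (P * q + R * p)"

lemma diag_rank_two_mult_vec_eq_0:
  fixes m :: nat and \<rho> w \<kappa> :: "nat \<Rightarrow> 'a::field"
  defines "R \<equiv> \<Sum>j<m. \<rho> j" and "S \<equiv> \<Sum>j<m. \<rho> j / w j" and "P \<equiv> \<Sum>j<m. \<rho> j * w j"
  assumes \<kappa>: "\<And>i. i < m \<Longrightarrow> \<kappa> i \<noteq> 0" and w: "\<And>j. j < m \<Longrightarrow> w j \<noteq> 0"
    and det: "rank_two_det R S P p q s \<noteq> 0"
    and v: "v \<in> carrier_vec m" "diag_rank_two_mat m \<kappa> \<rho> w p q s *\<^sub>v v = 0\<^sub>v m"
  shows "v = 0\<^sub>v m"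
proof -
  define Y0 where "Y0 = (\<Sum>j<m. \<rho> j * v $ j)"
  define Y1 where "Y1 = (\<Sum>j<m. \<rho> j * w j * v $ j)"
  define \<alpha> where "\<alpha> = - q * Y0 - s * Y1"
  define \<beta> where "\<beta> = - p * Y0 - q * Y1"
  have v_eq: "v $ j = \<alpha> + \<beta> / w j" if j: "j < m" for j
  proof -
    have "v = Matrix.vec m (\<lambda>j. v $ j)"
      using v(1) by auto
    then have "\<kappa> j * (w j * v $ j + (p + q * w j) * Y0 + (q + s * w j) * Y1) = 0"
      using v(2) j diag_rank_two_mult_vec[OF j, of \<kappa> \<rho> w p q s "\<lambda>j. v $ j"]
      by (simp add: Y0_def Y1_def)
    then have "w j * v $ j + (p + q * w j) * Y0 + (q + s * w j) * Y1 = 0"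
      using \<kappa>[OF j] by simp
    then have "w j * v $ j = \<alpha> * w j + \<beta>"
      by (simp add: \<alpha>_def \<beta>_def algebra_simps eq_neg_iff_add_eq_0)
    then show ?thesis
      using w[OF j] by (simp add: field_simps)
  qed
  have "Y0 = (\<Sum>j<m. \<rho> j * (\<alpha> + \<beta> / w j))"
    unfolding Y0_def using v_eq by (intro sum.cong) auto
  also have "\<dots> = \<alpha> * R + \<beta> * S"
    unfolding R_def S_def by (rule sum_affine_in_inverse)
  finally have Y0_eq: "Y0 = \<alpha> * R + \<beta> * S" .
  have "Y1 = (\<Sum>j<m. \<rho> j * w j * (\<alpha> + \<beta> / w j))"
    unfolding Y1_def using v_eq by (intro sum.cong) auto
  also have "\<dots> = \<alpha> * P + \<beta> * R"
    unfolding R_def P_def by (rule sum_weighted_affine_in_inverse[OF w])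
  finally have Y1_eq: "Y1 = \<alpha> * P + \<beta> * R" .
  have "(1 + R * q + S * p) * Y0 + (R * s + S * q) * Y1 = Y0 - (\<alpha> * R + \<beta> * S)"
    and "(P * q + R * p) * Y0 + (1 + P * s + R * q) * Y1 = Y1 - (\<alpha> * P + \<beta> * R)"
    by (simp_all add: \<alpha>_def \<beta>_def algebra_simps)
  then have "(1 + R * q + S * p) * Y0 + (R * s + S * q) * Y1 = 0 \<and>
      (P * q + R * p) * Y0 + (1 + P * s + R * q) * Y1 = 0"
    using Y0_eq Y1_eq by simp
  then have "Y0 = 0 \<and> Y1 = 0"
    using cramer_2x2[OF det[unfolded rank_two_det_def]] by simp
  then show ?thesis
    using v(1) v_eq by (intro eq_vecI) (simp_all add: \<alpha>_def \<beta>_def)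
qed

lemma diag_rank_two_mat_inverse_mult_vec:
  fixes m :: nat and \<rho> w \<kappa> :: "nat \<Rightarrow> 'a::field"
  defines "R \<equiv> \<Sum>j<m. \<rho> j" and "S \<equiv> \<Sum>j<m. \<rho> j / w j" and "P \<equiv> \<Sum>j<m. \<rho> j * w j"
  assumes \<kappa>: "\<And>i. i < m \<Longrightarrow> \<kappa> i \<noteq> 0" and w: "\<And>j. j < m \<Longrightarrow> w j \<noteq> 0"
    and det: "rank_two_det R S P p q s \<noteq> 0"
    and y: "(1 + R * q + S * p) * y + (R * s + S * q) * z = R * b + S * a"
    and z: "(P * q + R * p) * y + (1 + P * s + R * q) * z = P * b + R * a"
  shows "the (mat_inverse (diag_rank_two_mat m \<kappa> \<rho> w p q s)) *\<^sub>v Matrix.vec m (\<lambda>i. \<kappa> i * (a + b * w i))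
    = Matrix.vec m (\<lambda>j. (b - q * y - s * z) + (a - p * y - q * z) / w j)"
proof (rule mat_inverse_mult_vec[OF diag_rank_two_mat_carrier])
  show "v = 0\<^sub>v m" if "v \<in> carrier_vec m" "diag_rank_two_mat m \<kappa> \<rho> w p q s *\<^sub>v v = 0\<^sub>v m" for v
    using diag_rank_two_mult_vec_eq_0[OF \<kappa> w det[unfolded R_def S_def P_def] that] .
  show "diag_rank_two_mat m \<kappa> \<rho> w p q s *\<^sub>v Matrix.vec m (\<lambda>j. (b - q * y - s * z) + (a - p * y - q * z) / w j)
      = Matrix.vec m (\<lambda>i. \<kappa> i * (a + b * w i))"
    using diag_rank_two_mult_vec_affine_in_inverse[OF w y[unfolded R_def S_def] z[unfolded R_def P_def]] .
qed simp

section \<open>Remainders of power series expansions\<close>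

lemma has_fps_expansion_remainder_bigo:
  fixes f :: "real \<Rightarrow> real"
  assumes "f has_fps_expansion F"
  shows "(\<lambda>t. f t - (\<Sum>k<N. fps_nth F k * t ^ k)) \<in> O[at 0](\<lambda>t. t ^ N)"
proof -
  define G where "G = fps_shift N F"
  have radius: "fps_conv_radius F > 0" and near: "eventually (\<lambda>t. eval_fps F t = f t) (nhds 0)"
    using assms by (auto simp: has_fps_expansion_def)
  have "fps_conv_radius G \<ge> fps_conv_radius F"
    unfolding G_def by (simp add: fps_conv_radius_shift)
  then have "isCont (eval_fps G) 0"
    using radius by (intro continuous_eval_fps) (auto simp: zero_ereal_def)
  then have "eval_fps G \<in> O[at 0](\<lambda>_. 1)"
    by (intro bigoI_tendsto[where c = "eval_fps G 0"]) (auto simp: isCont_def)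
  then have "(\<lambda>t. t ^ N * eval_fps G t) \<in> O[at 0](\<lambda>t. t ^ N * 1)"
    by (rule landau_o.big.mult[OF landau_o.big_refl])
  then have bigo: "(\<lambda>t. t ^ N * eval_fps G t) \<in> O[at 0](\<lambda>t. t ^ N)"
    by simp
  have "eventually (\<lambda>t. t ^ N * eval_fps G t = f t - (\<Sum>k<N. fps_nth F k * t ^ k)) (at 0)"
  proof -
    have "eventually (\<lambda>t. t \<in> eball 0 (fps_conv_radius F)) (nhds 0)"
      using radius by (intro eventually_nhds_in_open) (auto simp: zero_ereal_def)
    then have "eventually (\<lambda>t. norm t < fps_conv_radius F) (nhds 0)"
      by eventually_elim (simp add: dist_norm)
    with near have "eventually (\<lambda>t. norm t < fps_conv_radius F \<and> eval_fps F t = f t) (nhds 0)"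
      by eventually_elim simp
    then have "eventually (\<lambda>t. norm t < fps_conv_radius F \<and> eval_fps F t = f t) (at 0)"
      unfolding eventually_at_filter by (auto elim: eventually_mono)
    then show ?thesis
    proof eventually_elim
      case (elim t)
      have "(\<lambda>k. fps_nth G k * t ^ k) sums eval_fps G t"
        using elim \<open>fps_conv_radius G \<ge> fps_conv_radius F\<close> by (intro sums_eval_fps) auto
      then have "(\<lambda>k. t ^ N * (fps_nth G k * t ^ k)) sums (t ^ N * eval_fps G t)"
        by (rule sums_mult)
      then have "(\<lambda>k. fps_nth F (k + N) * t ^ (k + N)) sums (t ^ N * eval_fps G t)"
        by (simp add: G_def power_add mult_ac)
      then have "(\<lambda>k. fps_nth F k * t ^ k) sums (t ^ N * eval_fps G t + (\<Sum>k<N. fps_nth F k * t ^ k))"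
        using sums_iff_shift[of "\<lambda>k. fps_nth F k * t ^ k" N] by simp
      with sums_eval_fps[of t F] elim show ?case
        by (auto dest: sums_unique2)
    qed
  qed
  from landau_o.big.in_cong[OF this] bigo show ?thesis
    by simp
qed

lemma has_fps_expansion_remainder_bigo_at_top:
  fixes f :: "real \<Rightarrow> real"
  assumes "f has_fps_expansion F"
  shows "(\<lambda>c. f (1 / c) - (\<Sum>k<N. fps_nth F k * (1 / c) ^ k)) \<in> O[at_top](\<lambda>c. (1 / c) ^ N)"
proof -
  have "filterlim (\<lambda>c::real. 1 / c) (at 0) at_top"
    using filterlim_mono[OF filterlim_inverse_at_right_top at_le[OF subset_UNIV] order_refl]
    by (simp add: inverse_eq_divide)
  then show ?thesis
    by (rule landau_o.big.compose[OF has_fps_expansion_remainder_bigo[OF assms]])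
qed

lemma fps_inverse_nth_Suc_0:
  fixes f :: "'a::field fps"
  assumes "fps_nth f 0 \<noteq> 0"
  shows "fps_nth (inverse f) (Suc 0) = - fps_nth f (Suc 0) / fps_nth f 0 ^ 2"
proof -
  have "fps_nth (inverse f * f) (Suc 0) = 0"
    using inverse_mult_eq_1[OF assms] by simp
  then show ?thesis
    using assms by (simp add: field_simps power2_eq_square eq_neg_iff_add_eq_0 add.commute)
qed

lemma powi_one_minus: "c \<noteq> 0 \<Longrightarrow> (c::real) powi (1 - int N) = c * (1 / c) ^ N"
  by (simp add: power_int_diff power_one_over)

lemma sum_powi_shift:
  fixes c :: real
  assumes "c \<noteq> 0"
  shows "(\<Sum>i=1..N. a (i - 1) * c powi (2 - int i)) = c * (\<Sum>k<N. a k * (1 / c) ^ k)"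
proof -
  have "(\<Sum>i=1..N. a (i - 1) * c powi (2 - int i)) = (\<Sum>k<N. a k * c powi (1 - int k))"
    by (simp add: sum.atLeast1_atMost_eq)
  also have "\<dots> = c * (\<Sum>k<N. a k * (1 / c) ^ k)"
    using assms by (simp add: powi_one_minus sum_distrib_left mult_ac)
  finally show ?thesis .
qed

section \<open>The quantity \<open>F(c)\<close>\<close>

locale vertex_data =
  fixes l :: nat and r :: "nat \<Rightarrow> nat" and d :: "nat \<Rightarrow> int" and g :: int
  assumes two_le_l: "2 \<le> l" and r_ge_1: "\<forall>k\<le>l. 1 \<le> r k" and sum_d: "(\<Sum>k\<le>l. d k) = 0"
begin

text \<open>A constant rather than an abbreviation, so that the simplifier keeps \<open>nV + 1\<close> and
  \<open>nV + 2\<close> intact as factors of denominators.\<close>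

definition nV :: real where "nV = real (rV l r)"

lemma r_pos: "k \<le> l \<Longrightarrow> 0 < real (r k)"
  using r_ge_1 by fastforce

lemma nV_ge_3: "3 \<le> nV"
proof -
  have "(\<Sum>k\<le>l. 1) \<le> rV l r"
    unfolding rV_def using r_ge_1 by (intro sum_mono) auto
  then show ?thesis
    using two_le_l by (simp add: nV_def)
qed

lemma one_le_l: "1 \<le> l"
  using two_le_l by simp

lemma piR_pos: "0 < piR l r"
  unfolding piR_def by (intro prod_pos) auto

lemma dV_eq_0: "dV l d = 0"
  using sum_d by (simp add: dV_def)

lemma fact_rV_Suc: "(fact (rV l r + 1) :: real) = (nV + 1) * fact (rV l r)"
  by (simp add: nV_def algebra_simps)

lemma fact_rV_Suc_Suc: "(fact (rV l r + 2) :: real) = (nV + 2) * (nV + 1) * fact (rV l r)"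
  by (simp add: nV_def numeral_2_eq_2 algebra_simps)

lemma fact_rV_pred: "(fact (rV l r - 1) :: real) = fact (rV l r) / nV"
proof -
  have "rV l r = Suc (rV l r - 1)"
    using nV_ge_3 by (simp add: nV_def)
  then have "(fact (rV l r) :: real) = nV * fact (rV l r - 1)"
    unfolding nV_def by (metis fact_Suc of_nat_Suc)
  then show ?thesis
    using nV_ge_3 by simp
qed

lemma sum_atLeast2_shift: "(\<Sum>j\<in>{2..l}. f j) = (\<Sum>i<l - 1. f (i + 2))"
proof -
  have "(\<Sum>j\<in>{2..l}. f j) = (\<Sum>j\<in>{0 + 2..<(l - 1) + 2}. f j)"
    using two_le_l by (intro sum.cong) auto
  also have "\<dots> = (\<Sum>i\<in>{0..<l - 1}. f (i + 2))"
    by (rule sum.shift_bounds_nat_ivl)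
  finally show ?thesis
    by (simp add: lessThan_atLeast0)
qed

lemma sum_atMost_l_split: "(\<Sum>k\<le>l. f k) = f 0 + f 1 + (\<Sum>i<l - 1. f (i + 2))"
proof -
  have "{..l} = {0, 1} \<union> {2..l}"
    using two_le_l by auto
  then show ?thesis
    by (simp add: sum.union_disjoint sum_atLeast2_shift add.assoc)
qed

lemma sum_d_from_2: "(\<Sum>i<l - 1. real_of_int (d (i + 2))) = - (real_of_int (d 0) + real_of_int (d 1))"
  using sum_atMost_l_split[of "\<lambda>k. real_of_int (d k)"] sum_d by (simp flip: of_int_sum)

definition wt :: "real \<Rightarrow> nat \<Rightarrow> real" where
  "wt c j = (nV + 2) * c - 2 * mu r d j"

lemma d_eq_wt: "k \<le> l \<Longrightarrow> real_of_int (d k) = real (r k) * ((nV + 2) * c - wt c k) / 2"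
  using r_pos[of k] by (simp add: wt_def mu_def)

text \<open>Rows and columns of \<^const>\<open>Amat\<close> are indexed by the vertices \<open>J = {2..l}\<close>; \<open>rJ\<close>,
  \<open>Sw c\<close> and \<open>Pw c\<close> are the sums of \<open>r\<^sub>j\<close>, \<open>r\<^sub>j / w\<^sub>j\<close> and \<open>r\<^sub>j w\<^sub>j\<close> over \<open>J\<close>.\<close>

abbreviation rJ :: real where
  "rJ \<equiv> nV - real (r 0) - real (r 1)"

definition Sw :: "real \<Rightarrow> real" where
  "Sw c = (\<Sum>i<l - 1. real (r (i + 2)) / wt c (i + 2))"

definition Pw :: "real \<Rightarrow> real" where
  "Pw c = (nV + 2) * c * rJ + 2 * (real (r 0) * mu r d 0 + real (r 1) * mu r d 1)"

lemma sum_r_from_2: "(\<Sum>i<l - 1. real (r (i + 2))) = rJ"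
  using sum_atMost_l_split[of "\<lambda>k. real (r k)"] by (simp add: nV_def rV_def)

lemma sum_r_wt_from_2: "(\<Sum>i<l - 1. real (r (i + 2)) * wt c (i + 2)) = Pw c"
proof -
  have "(\<Sum>i<l - 1. real (r (i + 2)) * wt c (i + 2))
      = (\<Sum>i<l - 1. (nV + 2) * c * real (r (i + 2)) - 2 * real_of_int (d (i + 2)))"
  proof (intro sum.cong refl)
    fix i assume "i \<in> {..<l - 1}"
    then have "real (r (i + 2)) \<noteq> 0"
      using r_pos[of "i + 2"] by simp
    then show "real (r (i + 2)) * wt c (i + 2) = (nV + 2) * c * real (r (i + 2)) - 2 * real_of_int (d (i + 2))"
      by (simp add: wt_def mu_def algebra_simps)
  qed
  also have "\<dots> = (nV + 2) * c * (\<Sum>i<l - 1. real (r (i + 2))) - 2 * (\<Sum>i<l - 1. real_of_int (d (i + 2)))"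
    by (simp add: sum_subtractf sum_distrib_left)
  also have "\<dots> = Pw c"
    unfolding sum_r_from_2 sum_d_from_2 Pw_def using r_pos[of 0] r_pos[of 1] two_le_l by (simp add: mu_def)
  finally show ?thesis .
qed

lemma wt_from_2_nonzero:
  assumes "\<forall>j\<le>l. 0 < wt c j" and "i < l - 1"
  shows "wt c (i + 2) \<noteq> 0"
proof -
  have "i + 2 \<le> l"
    using assms(2) by arith
  then show ?thesis
    using assms(1) by force
qed

lemma alpha0_eq: "alpha0 l r d c = piR l r / fact (rV l r) * nV * c"
  unfolding alpha0_def nV_def[symmetric] by (simp add: dV_eq_0)

lemma alpha1_eq:
  "alpha1 l r d c j = piR l r / ((nV + 1) * fact (rV l r)) * real (r j) * ((nV + 1) * c - mu r d j)"
  unfolding alpha1_def fact_rV_Suc nV_def[symmetric] by (simp add: dV_eq_0 algebra_simps)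

definition kappa :: real where
  "kappa = piR l r / ((nV + 2) * (nV + 1) * fact (rV l r))"

lemma kappa_pos: "0 < kappa"
  unfolding kappa_def using piR_pos nV_ge_3 by simp

lemma alpha2_eq: "alpha2 l r d c i j
    = kappa * ((if i = j then real (r i) * wt c i else 0) + real (r i) * real (r j) * (wt c i + wt c j) / 2)"
  unfolding alpha2_def fact_rV_Suc_Suc nV_def[symmetric] kappa_def[symmetric]
  by (simp add: dV_eq_0 wt_def field_simps)

lemma beta0_eq:
  "beta0 l r d g c = piR l r * nV / fact (rV l r) * ((nV - 1) * nV * c + 2 * (1 - real_of_int g))"
  unfolding beta0_def fact_rV_pred nV_def[symmetric] using nV_ge_3 by (simp add: dV_eq_0)

lemma beta1_eq: "beta1 l r d g c j = piR l r * real (r j) / fact (rV l r)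
    * (nV * (nV - 1) * c + 2 * (1 - real_of_int g) - nV * mu r d j)"
  unfolding beta1_def nV_def[symmetric] by (simp add: dV_eq_0)

definition cross_factor :: "real \<Rightarrow> real" where
  "cross_factor c = - 2 * piR l r ^ 2 * nV * (nV * c + real_of_int g - 1) / ((nV + 1) * fact (rV l r) ^ 2)"

lemma alpha_beta_cross:
  assumes "k \<le> l"
  shows "alpha0 l r d c * beta1 l r d g c k - alpha1 l r d c k * beta0 l r d g c = cross_factor c * real_of_int (d k)"
proof -
  define F where "F = (fact (rV l r) :: real)"
  define N where "N = nV + 1"
  have "F \<noteq> 0" "N \<noteq> 0"
    using nV_ge_3 by (auto simp: F_def N_def)
  moreover have "real_of_int (d k) = real (r k) * mu r d k"
    using r_pos[OF assms] by (simp add: mu_def)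
  ultimately show ?thesis
    unfolding alpha0_eq alpha1_eq beta0_eq beta1_eq cross_factor_def F_def[symmetric] N_def[symmetric]
    by (simp add: field_simps power2_eq_square) (simp add: N_def algebra_simps)
qed

text \<open>Coefficients of the bilinear form \<open>B(x, y) = bil0 c + bil1 (x + y) + bil2 c x y\<close> of
  \<open>A_entry_eq\<close>.\<close>

definition bil0 :: "real \<Rightarrow> real" where
  "bil0 c = - (nV + 2) * nV * c / (4 * (nV + 1))"

definition bil1 :: real where
  "bil1 = nV / (4 * (nV + 1))"

definition bil2 :: "real \<Rightarrow> real" where
  "bil2 c = - (nV + 2) / (4 * (nV + 1) * nV * c)"

definition A_entry :: "real \<Rightarrow> nat \<Rightarrow> nat \<Rightarrow> real" where
  "A_entry c i j = alpha2 l r d c i j - alpha1 l r d c i * alpha1 l r d c j / alpha0 l r d c"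

lemma A_entry_eq:
  assumes "c \<noteq> 0"
  shows "A_entry c i j = kappa * real (r i) * ((if i = j then wt c i else 0)
    + real (r j) * (bil0 c + bil1 * (wt c i + wt c j) + bil2 c * wt c i * wt c j))"
proof -
  define F where "F = (fact (rV l r) :: real)"
  define N where "N = nV + 1"
  define M where "M = nV + 2"
  have nonzero: "F \<noteq> 0" "N \<noteq> 0" "M \<noteq> 0" "nV \<noteq> 0" "piR l r \<noteq> 0"
    using nV_ge_3 piR_pos by (auto simp: F_def N_def M_def)
  have cross: "alpha1 l r d c i * alpha1 l r d c j / alpha0 l r d c = kappa * real (r i) * real (r j)
      * ((wt c i + wt c j) / 2 - (bil0 c + bil1 * (wt c i + wt c j) + bil2 c * wt c i * wt c j))"
    using nonzero assms
    unfolding alpha0_eq alpha1_eq kappa_def bil0_def bil1_def bil2_def wt_def F_def[symmetric] N_def[symmetric] M_def[symmetric]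
    by (simp add: field_simps) (simp add: N_def M_def algebra_simps)
  show ?thesis
    unfolding A_entry_def alpha2_eq cross by (simp add: field_simps)
qed

lemma Amat_eq:
  assumes "c \<noteq> 0"
  shows "Amat l r d c = diag_rank_two_mat (l - 1) (\<lambda>i. kappa * real (r (i + 2))) (\<lambda>i. real (r (i + 2)))
    (\<lambda>i. wt c (i + 2)) (bil0 c) bil1 (bil2 c)"
  unfolding Amat_def diag_rank_two_mat_def A_entry_def[symmetric]
  by (intro arg_cong[where f = "Matrix.mat (l - 1) (l - 1)"] ext) (auto simp: A_entry_eq[OF assms])

lemma A_entry_col1:
  assumes "c \<noteq> 0"
  shows "A_entry c (i + 2) 1 = kappa * real (r (i + 2)) * (real (r 1) * (bil0 c + bil1 * wt c 1)
    + real (r 1) * (bil1 + bil2 c * wt c 1) * wt c (i + 2))"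
  by (simp add: A_entry_eq[OF assms] algebra_simps)

lemma Fring_via_inverse:
  assumes B: "the (mat_inverse (Amat l r d c)) \<in> carrier_mat (l - 1) (l - 1)"
  shows "Fring l r d g c = cross_factor c * (real_of_int (d 1) - (\<Sum>i<l - 1. real_of_int (d (i + 2))
    * (the (mat_inverse (Amat l r d c)) *\<^sub>v Matrix.vec (l - 1) (\<lambda>j. A_entry c (j + 2) 1)) $ i))"
proof -
  define B where "B = the (mat_inverse (Amat l r d c))"
  define X where "X s = alpha0 l r d c * beta1 l r d g c s - alpha1 l r d c s * beta0 l r d g c" for s
  have X: "X k = cross_factor c * real_of_int (d k)" if "k \<le> l" for k
    using alpha_beta_cross[OF that] by (simp add: X_def)
  have col1: "alpha2 l r d c j 1 - alpha1 l r d c 1 * alpha1 l r d c j / alpha0 l r d c = A_entry c j 1" for j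
    by (simp add: A_entry_def mult.commute)
  have mult_vec: "(B *\<^sub>v Matrix.vec (l - 1) (\<lambda>j. A_entry c (j + 2) 1)) $ i
      = (\<Sum>j<l - 1. B $$ (i, j) * A_entry c (j + 2) 1)" if "i < l - 1" for i
    using B that by (auto simp: B_def scalar_prod_def lessThan_atLeast0 intro!: sum.cong)
  have "Fring l r d g c = X 1 - (\<Sum>j<l - 1. \<Sum>i<l - 1. B $$ (i, j) * X (i + 2) * A_entry c (j + 2) 1)"
    unfolding Fring_def Let_def col1 B_def[symmetric] X_def[symmetric] by (simp add: sum_atLeast2_shift)
  also have "\<dots> = X 1 - (\<Sum>i<l - 1. X (i + 2) * (\<Sum>j<l - 1. B $$ (i, j) * A_entry c (j + 2) 1))"
    by (subst sum.swap) (simp add: sum_distrib_left algebra_simps)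
  also have "\<dots> = cross_factor c * (real_of_int (d 1) - (\<Sum>i<l - 1. real_of_int (d (i + 2))
      * (B *\<^sub>v Matrix.vec (l - 1) (\<lambda>j. A_entry c (j + 2) 1)) $ i))"
  proof -
    have "X (i + 2) * (\<Sum>j<l - 1. B $$ (i, j) * A_entry c (j + 2) 1) = cross_factor c * (real_of_int (d (i + 2))
        * (B *\<^sub>v Matrix.vec (l - 1) (\<lambda>j. A_entry c (j + 2) 1)) $ i)" if "i < l - 1" for i
      using that X[of "i + 2"] mult_vec[OF that] by simp
    then show ?thesis
      using two_le_l X[of 1] by (simp add: sum_distrib_left right_diff_distrib)
  qed
  finally show ?thesis
    unfolding B_def .
qed

text \<open>Matrix of the moment system of \<open>diag_rank_two_mat_inverse_mult_vec\<close> for \<^const>\<open>Amat\<close>.\<close>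

definition m11 :: "real \<Rightarrow> real" where "m11 c = 1 + rJ * bil1 + Sw c * bil0 c"
definition m12 :: "real \<Rightarrow> real" where "m12 c = rJ * bil2 c + Sw c * bil1"
definition m21 :: "real \<Rightarrow> real" where "m21 c = Pw c * bil1 + rJ * bil0 c"
definition m22 :: "real \<Rightarrow> real" where "m22 c = 1 + Pw c * bil2 c + rJ * bil1"

definition moment_det :: "real \<Rightarrow> real" where
  "moment_det c = m11 c * m22 c - m12 c * m21 c"

lemma moment_adjugate_identity:
  assumes "c \<noteq> 0"
  shows "(nV + 2) * c * (m22 c - m12 c * wt c 1) - (m11 c * wt c 1 - m21 c)
    = - 2 * (mu r d 0 - mu r d 1) * real (r 0) / nV"
proof -
  define Z where "Z = 4 * (nV + 1)"
  have nonzero: "Z \<noteq> 0" "nV \<noteq> 0"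
    using nV_ge_3 by (auto simp: Z_def)
  have numerator: "(nV + 2) * c * (Z * nV * c + nV * nV * c * rJ - (nV + 2) * Pw c
      - wt c 1 * (nV * nV * c * Sw c - (nV + 2) * rJ))
      - (wt c 1 * (Z + nV * rJ - (nV + 2) * nV * c * Sw c) - (nV * Pw c - (nV + 2) * nV * c * rJ)) * (nV * c)
    = - 2 * (mu r d 0 - mu r d 1) * real (r 0) * (Z * c)"
    unfolding Pw_def wt_def Z_def by (simp add: algebra_simps)
  have "(nV + 2) * c * (m22 c - m12 c * wt c 1) - (m11 c * wt c 1 - m21 c)
    = ((nV + 2) * c * (Z * nV * c + nV * nV * c * rJ - (nV + 2) * Pw c
      - wt c 1 * (nV * nV * c * Sw c - (nV + 2) * rJ))
      - (wt c 1 * (Z + nV * rJ - (nV + 2) * nV * c * Sw c) - (nV * Pw c - (nV + 2) * nV * c * rJ)) * (nV * c))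
      / (Z * nV * c)"
    using nonzero assms unfolding m11_def m12_def m21_def m22_def bil0_def bil1_def bil2_def Z_def[symmetric]
    by (simp add: field_simps)
  also have "\<dots> = - 2 * (mu r d 0 - mu r d 1) * real (r 0) / nV"
    unfolding numerator using nonzero assms by simp
  finally show ?thesis .
qed

lemma moment_det_identity:
  assumes "c \<noteq> 0"
  shows "moment_det c * (4 * (nV + 1) * nV * c * wt c 0 * wt c 1)
    = (real (r 0) * wt c 0 + real (r 1) * wt c 1) * ((nV + 2) * wt c 0 * wt c 1
        - nV * c * (Sw c * wt c 0 * wt c 1 + real (r 0) * wt c 1 + real (r 1) * wt c 0))
      + 4 * nV * c * (mu r d 0 - mu r d 1)^2 * real (r 0) * real (r 1)"
proof -
  define Z where "Z = 4 * (nV + 1)"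
  have nonzero: "Z \<noteq> 0" "nV \<noteq> 0"
    using nV_ge_3 by (auto simp: Z_def)
  have numerator: "((Z + nV * rJ - (nV + 2) * nV * c * Sw c) * (Z * nV * c + nV * nV * c * rJ - (nV + 2) * Pw c)
      - (nV * nV * c * Sw c - (nV + 2) * rJ) * (nV * Pw c - (nV + 2) * nV * c * rJ)) * (wt c 0 * wt c 1)
    = ((real (r 0) * wt c 0 + real (r 1) * wt c 1) * ((nV + 2) * wt c 0 * wt c 1
        - nV * c * (Sw c * wt c 0 * wt c 1 + real (r 0) * wt c 1 + real (r 1) * wt c 0))
      + 4 * nV * c * (mu r d 0 - mu r d 1)^2 * real (r 0) * real (r 1)) * Z"
    unfolding Pw_def wt_def Z_def by (simp add: algebra_simps power2_eq_square)
  have "moment_det c * (Z * nV * c * wt c 0 * wt c 1)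
    = ((Z + nV * rJ - (nV + 2) * nV * c * Sw c) * (Z * nV * c + nV * nV * c * rJ - (nV + 2) * Pw c)
      - (nV * nV * c * Sw c - (nV + 2) * rJ) * (nV * Pw c - (nV + 2) * nV * c * rJ)) * (wt c 0 * wt c 1) / Z"
    using nonzero assms
    unfolding moment_det_def m11_def m12_def m21_def m22_def bil0_def bil1_def bil2_def Z_def[symmetric]
    by (simp add: field_simps)
  also have "\<dots> = (real (r 0) * wt c 0 + real (r 1) * wt c 1) * ((nV + 2) * wt c 0 * wt c 1
        - nV * c * (Sw c * wt c 0 * wt c 1 + real (r 0) * wt c 1 + real (r 1) * wt c 0))
      + 4 * nV * c * (mu r d 0 - mu r d 1)^2 * real (r 0) * real (r 1)"
    unfolding numerator using nonzero by simp
  finally show ?thesis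
    by (simp add: Z_def)
qed

lemma Amat_inverse_mult_col1:
  fixes c Y0 Y1 :: real
  defines "h0 \<equiv> real (r 1) * (bil0 c + bil1 * wt c 1)" and "h1 \<equiv> real (r 1) * (bil1 + bil2 c * wt c 1)"
  assumes c: "0 < c" and wt_pos: "\<forall>j\<le>l. 0 < wt c j" and det: "moment_det c \<noteq> 0"
    and Y0: "m11 c * Y0 + m12 c * Y1 = rJ * h1 + Sw c * h0"
    and Y1: "m21 c * Y0 + m22 c * Y1 = Pw c * h1 + rJ * h0"
  shows "the (mat_inverse (Amat l r d c)) \<in> carrier_mat (l - 1) (l - 1)"
    and "the (mat_inverse (Amat l r d c)) *\<^sub>v Matrix.vec (l - 1) (\<lambda>j. A_entry c (j + 2) 1)
      = Matrix.vec (l - 1) (\<lambda>j. (h1 - bil1 * Y0 - bil2 c * Y1) + (h0 - bil0 c * Y0 - bil1 * Y1) / wt c (j + 2))"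
proof -
  define \<kappa> where "\<kappa> = (\<lambda>i. kappa * real (r (i + 2)))"
  define \<rho> where "\<rho> = (\<lambda>i. real (r (i + 2)))"
  define w where "w = (\<lambda>i. wt c (i + 2))"
  have A: "Amat l r d c = diag_rank_two_mat (l - 1) \<kappa> \<rho> w (bil0 c) bil1 (bil2 c)"
    using c by (simp add: Amat_eq \<kappa>_def \<rho>_def w_def)
  have b: "Matrix.vec (l - 1) (\<lambda>j. A_entry c (j + 2) 1) = Matrix.vec (l - 1) (\<lambda>i. \<kappa> i * (h0 + h1 * w i))"
    using c unfolding A_entry_col1[OF less_imp_neq[OF c, symmetric]] \<kappa>_def w_def h0_def h1_def
    by (simp add: algebra_simps)
  have \<kappa>_nonzero: "\<kappa> i \<noteq> 0" if "i < l - 1" for i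
    using that kappa_pos r_pos[of "i + 2"] by (simp add: \<kappa>_def)
  have w_nonzero: "w j \<noteq> 0" if "j < l - 1" for j
    using wt_from_2_nonzero[OF wt_pos that] by (simp add: w_def)
  have sums: "(\<Sum>j<l - 1. \<rho> j) = rJ" "(\<Sum>j<l - 1. \<rho> j / w j) = Sw c" "(\<Sum>j<l - 1. \<rho> j * w j) = Pw c"
    unfolding \<rho>_def w_def sum_r_from_2 sum_r_wt_from_2 Sw_def by simp_all
  note solution = diag_rank_two_mat_inverse_mult_vec[where m = "l - 1" and \<kappa> = \<kappa> and \<rho> = \<rho> and w = w and p = "bil0 c"
      and q = bil1 and s = "bil2 c" and a = h0 and b = h1 and y = Y0 and z = Y1, unfolded sums]
  note kernel = diag_rank_two_mult_vec_eq_0[where m = "l - 1" and \<kappa> = \<kappa> and \<rho> = \<rho> and w = w and p = "bil0 c"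
      and q = bil1 and s = "bil2 c", unfolded sums]
  have det': "rank_two_det rJ (Sw c) (Pw c) (bil0 c) bil1 (bil2 c) \<noteq> 0"
    using det by (simp add: moment_det_def rank_two_det_def m11_def m12_def m21_def m22_def)
  show "the (mat_inverse (Amat l r d c)) \<in> carrier_mat (l - 1) (l - 1)"
    unfolding A using kernel[OF \<kappa>_nonzero w_nonzero det']
    by (intro mat_inverse_injective(1) diag_rank_two_mat_carrier)
  show "the (mat_inverse (Amat l r d c)) *\<^sub>v Matrix.vec (l - 1) (\<lambda>j. A_entry c (j + 2) 1)
      = Matrix.vec (l - 1) (\<lambda>j. (h1 - bil1 * Y0 - bil2 c * Y1) + (h0 - bil0 c * Y0 - bil1 * Y1) / wt c (j + 2))"
    unfolding A b using solution[OF \<kappa>_nonzero w_nonzero det'] Y0 Y1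
    by (simp add: w_def m11_def m12_def m21_def m22_def)
qed

lemma sum_d_affine_in_inverse:
  assumes "\<forall>j\<le>l. 0 < wt c j"
  shows "(\<Sum>i<l - 1. real_of_int (d (i + 2)) * (\<alpha> + \<beta> / wt c (i + 2)))
    = ((nV + 2) * c * (\<alpha> * rJ + \<beta> * Sw c) - (\<alpha> * Pw c + \<beta> * rJ)) / 2"
proof -
  define \<rho> where "\<rho> = (\<lambda>i. real (r (i + 2)))"
  define w where "w = (\<lambda>i. wt c (i + 2))"
  have w_nonzero: "w j \<noteq> 0" if "j < l - 1" for j
    using wt_from_2_nonzero[OF assms that] by (simp add: w_def)
  have sums: "(\<Sum>i<l - 1. \<rho> i) = rJ" "(\<Sum>i<l - 1. \<rho> i / w i) = Sw c" "(\<Sum>i<l - 1. \<rho> i * w i) = Pw c"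
    unfolding \<rho>_def w_def sum_r_from_2 sum_r_wt_from_2 Sw_def by simp_all
  have moment0: "(\<Sum>i<l - 1. \<rho> i * (\<alpha> + \<beta> / w i)) = \<alpha> * (\<Sum>i<l - 1. \<rho> i) + \<beta> * (\<Sum>i<l - 1. \<rho> i / w i)"
    by (rule sum_affine_in_inverse)
  have moment1: "(\<Sum>i<l - 1. \<rho> i * w i * (\<alpha> + \<beta> / w i)) = \<alpha> * (\<Sum>i<l - 1. \<rho> i * w i) + \<beta> * (\<Sum>i<l - 1. \<rho> i)"
    by (rule sum_weighted_affine_in_inverse[OF w_nonzero])
  have "(\<Sum>i<l - 1. real_of_int (d (i + 2)) * (\<alpha> + \<beta> / wt c (i + 2)))
      = (\<Sum>i<l - 1. ((nV + 2) * c * (\<rho> i * (\<alpha> + \<beta> / w i)) - \<rho> i * w i * (\<alpha> + \<beta> / w i)) / 2)"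
  proof (intro sum.cong refl)
    fix i assume "i \<in> {..<l - 1}"
    then have "i + 2 \<le> l" and "w i \<noteq> 0"
      using w_nonzero by auto
    then show "real_of_int (d (i + 2)) * (\<alpha> + \<beta> / wt c (i + 2))
        = ((nV + 2) * c * (\<rho> i * (\<alpha> + \<beta> / w i)) - \<rho> i * w i * (\<alpha> + \<beta> / w i)) / 2"
      unfolding d_eq_wt[OF \<open>i + 2 \<le> l\<close>, of c] \<rho>_def w_def by (simp add: field_simps)
  qed
  also have "\<dots> = ((nV + 2) * c * (\<Sum>i<l - 1. \<rho> i * (\<alpha> + \<beta> / w i))
      - (\<Sum>i<l - 1. \<rho> i * w i * (\<alpha> + \<beta> / w i))) / 2"
    by (simp only: sum_subtractf sum_distrib_left flip: sum_divide_distrib)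
  also have "\<dots> = ((nV + 2) * c * (\<alpha> * rJ + \<beta> * Sw c) - (\<alpha> * Pw c + \<beta> * rJ)) / 2"
    unfolding moment0 moment1 sums ..
  finally show ?thesis .
qed

lemma Fring_eq_moments:
  fixes c Y0 Y1 :: real
  defines "h0 \<equiv> real (r 1) * (bil0 c + bil1 * wt c 1)" and "h1 \<equiv> real (r 1) * (bil1 + bil2 c * wt c 1)"
  assumes c: "0 < c" and wt_pos: "\<forall>j\<le>l. 0 < wt c j" and det: "moment_det c \<noteq> 0"
    and Y0: "m11 c * Y0 + m12 c * Y1 = rJ * h1 + Sw c * h0"
    and Y1: "m21 c * Y0 + m22 c * Y1 = Pw c * h1 + rJ * h0"
  shows "Fring l r d g c = cross_factor c * (real_of_int (d 1) - ((nV + 2) * c * Y0 - Y1) / 2)"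
proof -
  define \<alpha> where "\<alpha> = h1 - bil1 * Y0 - bil2 c * Y1"
  define \<beta> where "\<beta> = h0 - bil0 c * Y0 - bil1 * Y1"
  have "\<alpha> * rJ + \<beta> * Sw c - Y0 = rJ * h1 + Sw c * h0 - (m11 c * Y0 + m12 c * Y1)"
    and "\<alpha> * Pw c + \<beta> * rJ - Y1 = Pw c * h1 + rJ * h0 - (m21 c * Y0 + m22 c * Y1)"
    by (simp_all add: \<alpha>_def \<beta>_def m11_def m12_def m21_def m22_def algebra_simps)
  then have moments: "\<alpha> * rJ + \<beta> * Sw c = Y0" "\<alpha> * Pw c + \<beta> * rJ = Y1"
    using Y0 Y1 by simp_all
  note inverse = Amat_inverse_mult_col1[OF c wt_pos det Y0[unfolded h0_def h1_def] Y1[unfolded h0_def h1_def]]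
  have "Fring l r d g c
      = cross_factor c * (real_of_int (d 1) - (\<Sum>i<l - 1. real_of_int (d (i + 2)) * (\<alpha> + \<beta> / wt c (i + 2))))"
    using Fring_via_inverse[OF inverse(1)] inverse(2) by (simp add: \<alpha>_def \<beta>_def h0_def h1_def)
  then show ?thesis
    unfolding sum_d_affine_in_inverse[OF wt_pos] moments .
qed

lemma Fring_closed_form:
  assumes c: "0 < c" and wt_pos: "\<forall>j\<le>l. 0 < wt c j" and det: "moment_det c \<noteq> 0"
  shows "Fring l r d g c * (nV * moment_det c) = - cross_factor c * (mu r d 0 - mu r d 1) * real (r 0) * real (r 1)"
proof -
  \<comment> \<open>The moments are \<open>r\<^sub>1 (1, w\<^sub>1) - z\<close>, where \<open>z\<close> solves the system with right-hand side \<open>r\<^sub>1 (1, w\<^sub>1)\<close>.\<close>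
  define z0 where "z0 = real (r 1) * (m22 c - m12 c * wt c 1) / moment_det c"
  define z1 where "z1 = real (r 1) * (m11 c * wt c 1 - m21 c) / moment_det c"
  have z: "m11 c * z0 + m12 c * z1 = real (r 1)" "m21 c * z0 + m22 c * z1 = real (r 1) * wt c 1"
    using cramer_2x2[of "m11 c" "m22 c" "m12 c" "m21 c" z0 z1 "real (r 1)" "real (r 1) * wt c 1"] det
    by (simp_all add: z0_def z1_def moment_det_def algebra_simps)
  have "m11 c * (real (r 1) - z0) + m12 c * (real (r 1) * wt c 1 - z1)
      = real (r 1) * (m11 c + m12 c * wt c 1) - (m11 c * z0 + m12 c * z1)"
    and "m21 c * (real (r 1) - z0) + m22 c * (real (r 1) * wt c 1 - z1)
      = real (r 1) * (m21 c + m22 c * wt c 1) - (m21 c * z0 + m22 c * z1)"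
    by (simp_all add: algebra_simps)
  then have "Fring l r d g c = cross_factor c * (real_of_int (d 1)
      - ((nV + 2) * c * (real (r 1) - z0) - (real (r 1) * wt c 1 - z1)) / 2)"
    unfolding z by (intro Fring_eq_moments[OF c wt_pos det])
      (simp_all add: m11_def m12_def m21_def m22_def algebra_simps)
  also have "\<dots> = cross_factor c * ((nV + 2) * c * z0 - z1) / 2"
    using d_eq_wt[OF one_le_l, of c] by (simp add: field_simps)
  finally have Fring: "Fring l r d g c = cross_factor c * ((nV + 2) * c * z0 - z1) / 2" .
  have z_det: "((nV + 2) * c * z0 - z1) * moment_det c
      = real (r 1) * ((nV + 2) * c * (m22 c - m12 c * wt c 1) - (m11 c * wt c 1 - m21 c))"
    using det by (simp add: z0_def z1_def field_simps)
  have "Fring l r d g c * (nV * moment_det c) = cross_factor c * nV / 2 * (((nV + 2) * c * z0 - z1) * moment_det c)"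
    unfolding Fring by (simp add: field_simps)
  also have "\<dots> = - cross_factor c * (mu r d 0 - mu r d 1) * real (r 0) * real (r 1)"
    unfolding z_det moment_adjugate_identity[OF less_imp_neq[OF c, symmetric]] using nV_ge_3
    by (simp add: field_simps)
  finally show ?thesis .
qed

definition wt_t :: "real \<Rightarrow> nat \<Rightarrow> real" where
  "wt_t t j = nV + 2 - 2 * mu r d j * t"

definition Qt :: "real \<Rightarrow> real" where
  "Qt t = 1 + nV / 2 - nV / 2 * (\<Sum>k\<le>l. real (r k) * inverse (wt_t t k))"

definition Dt :: "real \<Rightarrow> real" where
  "Dt t = (real (r 0) * wt_t t 0 + real (r 1) * wt_t t 1) * (wt_t t 0 * wt_t t 1) * Qt t
     + 2 * nV * (mu r d 0 - mu r d 1)^2 * real (r 0) * real (r 1) * t^2"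

definition Ht :: "real \<Rightarrow> real" where
  "Ht t = 4 * piR l r ^ 2 * nV * real (r 0) * real (r 1) / fact (rV l r) ^ 2
     * (nV + (real_of_int g - 1) * t) * (wt_t t 0 * wt_t t 1) * inverse (Dt t)"

lemma wt_t_inverse: "c \<noteq> 0 \<Longrightarrow> wt_t (1 / c) j = wt c j / c"
  by (simp add: wt_t_def wt_def field_simps)

lemma Dt_inverse:
  assumes c: "c \<noteq> 0" and wt_nonzero: "\<forall>j\<le>l. wt c j \<noteq> 0"
  shows "2 * c^3 * Dt (1 / c) = (real (r 0) * wt c 0 + real (r 1) * wt c 1) * ((nV + 2) * wt c 0 * wt c 1
        - nV * c * (Sw c * wt c 0 * wt c 1 + real (r 0) * wt c 1 + real (r 1) * wt c 0))
      + 4 * nV * c * (mu r d 0 - mu r d 1)^2 * real (r 0) * real (r 1)"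
proof -
  have w: "wt c 0 \<noteq> 0" "wt c 1 \<noteq> 0"
    using wt_nonzero two_le_l by auto
  have sum: "(\<Sum>k\<le>l. real (r k) * inverse (wt_t (1 / c) k)) = c * (real (r 0) / wt c 0 + real (r 1) / wt c 1 + Sw c)"
    unfolding sum_atMost_l_split unfolding Sw_def wt_t_inverse[OF c]
    by (simp add: sum_distrib_left field_simps)
  show ?thesis
    using c w unfolding Dt_def Qt_def sum unfolding wt_t_inverse[OF c]
    by (simp add: field_simps power2_eq_square power3_eq_cube)
qed

lemma Fring_eq_Ht:
  assumes c: "0 < c" and wt_pos: "\<forall>j\<le>l. 0 < wt c j" and Dt: "Dt (1 / c) \<noteq> 0"
  shows "Fring l r d g c = (mu r d 0 - mu r d 1) * c * Ht (1 / c)"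
proof -
  define F where "F = (fact (rV l r) :: real)"
  define N where "N = nV + 1"
  have nonzero: "c \<noteq> 0" "nV \<noteq> 0" "N \<noteq> 0" "F \<noteq> 0"
    using c nV_ge_3 by (auto simp: F_def N_def)
  have det_Dt: "moment_det c * (4 * (nV + 1) * nV * c * wt c 0 * wt c 1) = 2 * c^3 * Dt (1 / c)"
  proof -
    have wt_nonzero: "\<forall>j\<le>l. wt c j \<noteq> 0"
      using wt_pos by force
    show ?thesis
      unfolding Dt_inverse[OF nonzero(1) wt_nonzero] by (rule moment_det_identity[OF nonzero(1)])
  qed
  then have det: "moment_det c \<noteq> 0"
    using Dt nonzero by auto
  have Ht_Dt: "Ht (1 / c) * Dt (1 / c) = 4 * piR l r ^ 2 * nV * real (r 0) * real (r 1) / F ^ 2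
      * (nV + (real_of_int g - 1) / c) * (wt c 0 / c * (wt c 1 / c))"
    using Dt by (simp add: Ht_def wt_t_inverse[OF nonzero(1)] F_def)
  have "Fring l r d g c * (nV * (2 * c^3 * Dt (1 / c)))
      = Fring l r d g c * (nV * moment_det c) * (4 * (nV + 1) * nV * c * wt c 0 * wt c 1)"
    unfolding det_Dt[symmetric] by (simp add: mult_ac)
  also have "\<dots> = (mu r d 0 - mu r d 1) * c * (Ht (1 / c) * Dt (1 / c)) * (nV * (2 * c^3))"
    unfolding Fring_closed_form[OF c wt_pos det] Ht_Dt cross_factor_def F_def[symmetric] N_def[symmetric] using nonzero
    by (simp add: field_simps power2_eq_square power3_eq_cube)
  also have "\<dots> = (mu r d 0 - mu r d 1) * c * Ht (1 / c) * (nV * (2 * c^3 * Dt (1 / c)))"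
    by (simp add: mult_ac)
  finally have "Fring l r d g c * (nV * (2 * c^3 * Dt (1 / c)))
      = (mu r d 0 - mu r d 1) * c * Ht (1 / c) * (nV * (2 * c^3 * Dt (1 / c)))" .
  moreover have "nV * (2 * c^3 * Dt (1 / c)) \<noteq> 0"
    using Dt nonzero by simp
  ultimately show ?thesis
    by simp
qed

definition wt_t_fps :: "nat \<Rightarrow> real fps" where
  "wt_t_fps j = fps_const (nV + 2) - fps_const (2 * mu r d j) * fps_X"

definition Qt_fps :: "real fps" where
  "Qt_fps = fps_const (1 + nV / 2) - fps_const (nV / 2) * (\<Sum>k\<le>l. fps_const (real (r k)) * inverse (wt_t_fps k))"

definition Dt_fps :: "real fps" where
  "Dt_fps = (fps_const (real (r 0)) * wt_t_fps 0 + fps_const (real (r 1)) * wt_t_fps 1) * (wt_t_fps 0 * wt_t_fps 1) * Qt_fps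
     + fps_const (2 * nV * (mu r d 0 - mu r d 1)^2 * real (r 0) * real (r 1)) * fps_X ^ 2"

definition Ht_fps :: "real fps" where
  "Ht_fps = fps_const (4 * piR l r ^ 2 * nV * real (r 0) * real (r 1) / fact (rV l r) ^ 2)
     * (fps_const nV + fps_const (real_of_int g - 1) * fps_X) * (wt_t_fps 0 * wt_t_fps 1) * inverse Dt_fps"

lemma wt_t_fps_nth: "fps_nth (wt_t_fps j) 0 = nV + 2" "fps_nth (wt_t_fps j) (Suc 0) = - 2 * mu r d j"
  by (simp_all add: wt_t_fps_def)

lemma wt_t_has_fps_expansion: "(\<lambda>t. wt_t t j) has_fps_expansion wt_t_fps j"
  unfolding wt_t_def wt_t_fps_def by (intro fps_expansion_intros)

lemma Qt_fps_nth: "fps_nth Qt_fps 0 = 2 * (nV + 1) / (nV + 2)" "fps_nth Qt_fps (Suc 0) = 0"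
proof -
  have nonzero: "nV + 2 \<noteq> 0"
    using nV_ge_3 by simp
  have inverse_nth: "fps_nth (inverse (wt_t_fps k)) 0 = 1 / (nV + 2)"
    "fps_nth (inverse (wt_t_fps k)) (Suc 0) = 2 * mu r d k / (nV + 2)^2" for k
    using nonzero by (simp_all add: wt_t_fps_nth fps_inverse_nth_Suc_0 divide_inverse)
  have "fps_nth (\<Sum>k\<le>l. fps_const (real (r k)) * inverse (wt_t_fps k)) 0 = nV / (nV + 2)"
    by (simp add: fps_sum_nth wt_t_fps_nth divide_inverse nV_def rV_def flip: sum_distrib_right)
  then show "fps_nth Qt_fps 0 = 2 * (nV + 1) / (nV + 2)"
    using nonzero by (simp add: Qt_fps_def field_simps)
  have "fps_nth (\<Sum>k\<le>l. fps_const (real (r k)) * inverse (wt_t_fps k)) (Suc 0)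
      = 2 * (\<Sum>k\<le>l. real (r k) * mu r d k) / (nV + 2)^2"
    by (simp add: fps_sum_nth inverse_nth sum_divide_distrib[symmetric] sum_distrib_left algebra_simps)
  also have "(\<Sum>k\<le>l. real (r k) * mu r d k) = 0"
    using sum_d r_pos by (simp add: mu_def flip: of_int_sum)
  finally show "fps_nth Qt_fps (Suc 0) = 0"
    by (simp add: Qt_fps_def)
qed

lemma Dt_fps_nth:
  "fps_nth Dt_fps 0 = 2 * (nV + 1) * (nV + 2)^2 * (real (r 0) + real (r 1))"
  "fps_nth Dt_fps (Suc 0) = - 4 * (nV + 1) * ((real (r 0) + real (r 1)) * (mu r d 0 + mu r d 1)
      + real (r 0) * mu r d 0 + real (r 1) * mu r d 1) * (nV + 2)"
proof -
  define M where "M = nV + 2"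
  have M: "M \<noteq> 0" "nV = M - 2"
    using nV_ge_3 by (simp_all add: M_def)
  have nth: "fps_nth (wt_t_fps j) 0 = M" "fps_nth Qt_fps 0 = 2 * (M - 1) / M" for j
    by (simp_all add: wt_t_fps_nth Qt_fps_nth M_def)
  show "fps_nth Dt_fps 0 = 2 * (nV + 1) * (nV + 2)^2 * (real (r 0) + real (r 1))"
    "fps_nth Dt_fps (Suc 0) = - 4 * (nV + 1) * ((real (r 0) + real (r 1)) * (mu r d 0 + mu r d 1)
      + real (r 0) * mu r d 0 + real (r 1) * mu r d 1) * (nV + 2)"
    unfolding Dt_fps_def using M(1) by (simp_all add: nth wt_t_fps_nth Qt_fps_nth(2) M(2) field_simps power2_eq_square)
qed

lemma Dt_fps_nth_0_nonzero: "fps_nth Dt_fps 0 \<noteq> 0"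
  unfolding Dt_fps_nth using nV_ge_3 r_pos[of 0] r_pos[of 1] two_le_l by simp

lemma Dt_has_fps_expansion: "Dt has_fps_expansion Dt_fps"
proof -
  have "(\<lambda>t. Qt t) has_fps_expansion Qt_fps"
    unfolding Qt_def Qt_fps_def using nV_ge_3
    by (intro fps_expansion_intros wt_t_has_fps_expansion) (simp add: wt_t_fps_nth)
  then show ?thesis
    unfolding Dt_def[abs_def] Dt_fps_def by (intro fps_expansion_intros wt_t_has_fps_expansion)
qed

lemma Ht_has_fps_expansion: "Ht has_fps_expansion Ht_fps"
  unfolding Ht_def[abs_def] Ht_fps_def using Dt_fps_nth_0_nonzero
  by (intro fps_expansion_intros wt_t_has_fps_expansion Dt_has_fps_expansion)

lemma Ht_fps_nth_0: "fps_nth Ht_fps 0 = 2 * piR l r ^ 2 * real (rV l r) * real (r 0) * real (r 1)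
    / (fact (rV l r - 1) * fact (rV l r + 1) * real (r 0 + r 1))"
proof -
  define F where "F = (fact (rV l r) :: real)"
  define N where "N = nV + 1"
  define M where "M = nV + 2"
  define R where "R = real (r 0) + real (r 1)"
  have nonzero: "F \<noteq> 0" "N \<noteq> 0" "M \<noteq> 0" "nV \<noteq> 0" "R \<noteq> 0"
    using nV_ge_3 r_pos[of 0] r_pos[of 1] by (auto simp: F_def N_def M_def R_def)
  have nth: "fps_nth (wt_t_fps j) 0 = M" "fps_nth Dt_fps 0 = 2 * N * M^2 * R" for j
    unfolding wt_t_fps_nth Dt_fps_nth M_def N_def R_def by simp_all
  show ?thesis
    unfolding nV_def[symmetric] fact_rV_pred fact_rV_Suc Ht_fps_def of_nat_add F_def[symmetric] N_def[symmetric]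
      R_def[symmetric] using nonzero
    by (simp add: nth field_simps power2_eq_square)
qed

lemma Ht_fps_nth_Suc_0: "fps_nth Ht_fps (Suc 0) = 2 * real (r 0) * real (r 1) * piR l r ^ 2
    / (fact (rV l r - 1) * fact (rV l r + 2) * real (r 0 + r 1))
    * ((real (rV l r) + 2) * (real_of_int g - 1) + 2 * real (rV l r) * (real_of_int (d 0 + d 1) / real (r 0 + r 1)))"
proof -
  define F where "F = (fact (rV l r) :: real)"
  define N where "N = nV + 1"
  define M where "M = nV + 2"
  define R where "R = real (r 0) + real (r 1)"
  have nonzero: "F \<noteq> 0" "N \<noteq> 0" "M \<noteq> 0" "nV \<noteq> 0" "R \<noteq> 0"
    using nV_ge_3 r_pos[of 0] r_pos[of 1] by (auto simp: F_def N_def M_def R_def)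
  have nth: "fps_nth (wt_t_fps j) 0 = M" "fps_nth Dt_fps 0 = 2 * N * M^2 * R"
    "fps_nth Dt_fps (Suc 0) = - 4 * N * (R * (mu r d 0 + mu r d 1)
      + real (r 0) * mu r d 0 + real (r 1) * mu r d 1) * M" for j
    unfolding wt_t_fps_nth Dt_fps_nth M_def N_def R_def by simp_all
  have d01: "real_of_int (d 0 + d 1) = real (r 0) * mu r d 0 + real (r 1) * mu r d 1"
    using r_pos[of 0] r_pos[of 1] two_le_l by (simp add: mu_def)
  show ?thesis
    unfolding nV_def[symmetric] fact_rV_pred fact_rV_Suc_Suc Ht_fps_def d01 of_nat_add F_def[symmetric] N_def[symmetric]
      M_def[symmetric] R_def[symmetric] using nonzero
    by (simp add: nth wt_t_fps_nth fps_inverse_nth_Suc_0[OF Dt_fps_nth_0_nonzero] field_simps power2_eq_square)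
qed

lemma eventually_admissible: "eventually (\<lambda>c. 0 < c \<and> (\<forall>j\<le>l. 0 < wt c j) \<and> Dt (1 / c) \<noteq> 0) at_top"
proof -
  have inverse_0: "((\<lambda>c::real. 1 / c) \<longlongrightarrow> 0) at_top"
    by (intro tendsto_divide_0[OF tendsto_const] filterlim_at_top_imp_at_infinity filterlim_ident)
  have "eventually (\<lambda>c. 0 < wt_t (1 / c) j) at_top" for j
  proof (rule order_tendstoD(1))
    show "((\<lambda>c. wt_t (1 / c) j) \<longlongrightarrow> nV + 2) at_top"
      unfolding wt_t_def using tendsto_diff[OF tendsto_const tendsto_mult[OF tendsto_const inverse_0]] by simp
  qed (use nV_ge_3 in simp)
  then have "eventually (\<lambda>c. \<forall>j\<in>{..l}. 0 < wt_t (1 / c) j) at_top"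
    by (intro eventually_ball_finite) auto
  moreover have "eventually (\<lambda>c. Dt (1 / c) \<noteq> 0) at_top"
  proof (rule tendsto_imp_eventually_ne)
    have "isCont Dt 0"
      using has_fps_expansion_imp_continuous[OF Dt_has_fps_expansion] by simp
    then show "((\<lambda>c. Dt (1 / c)) \<longlongrightarrow> Dt 0) at_top"
      by (rule isCont_tendsto_compose[OF _ inverse_0])
    have "eval_fps Dt_fps 0 = Dt 0"
      using Dt_has_fps_expansion by (auto simp: has_fps_expansion_def dest: eventually_nhds_x_imp_x)
    then show "Dt 0 \<noteq> 0"
      using Dt_fps_nth_0_nonzero by (simp add: eval_fps_at_0)
  qed
  moreover have "eventually (\<lambda>c::real. 0 < c) at_top"
    by (rule eventually_gt_at_top)
  ultimately show ?thesis
  proof eventually_elim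
    case (elim c)
    then show ?case
      using wt_t_inverse[of c] by (auto simp: field_simps)
  qed
qed

lemma Ht_fps_nth_0_pos: "0 < fps_nth Ht_fps 0"
  unfolding Ht_fps_nth_0 using piR_pos r_pos[of 0] r_pos[of 1] two_le_l nV_ge_3 by (simp add: nV_def)

lemma Fring_asymptotic_expansion:
  "(\<lambda>c. Fring l r d g c - (mu r d 0 - mu r d 1) * (\<Sum>i=1..N. fps_nth Ht_fps (i - 1) * c powi (2 - int i)))
    \<in> O[at_top](\<lambda>c. (mu r d 0 - mu r d 1) * c powi (1 - int N))"
proof -
  let ?\<delta> = "\<lambda>c::real. (mu r d 0 - mu r d 1) * c"
  have remainder: "(\<lambda>c. ?\<delta> c * (Ht (1 / c) - (\<Sum>k<N. fps_nth Ht_fps k * (1 / c) ^ k)))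
      \<in> O[at_top](\<lambda>c. ?\<delta> c * (1 / c) ^ N)"
    by (intro landau_o.big.mult landau_o.big_refl has_fps_expansion_remainder_bigo_at_top Ht_has_fps_expansion)
  have closed_form: "eventually (\<lambda>c. ?\<delta> c * (Ht (1 / c) - (\<Sum>k<N. fps_nth Ht_fps k * (1 / c) ^ k))
      = Fring l r d g c - (mu r d 0 - mu r d 1) * (\<Sum>i=1..N. fps_nth Ht_fps (i - 1) * c powi (2 - int i))) at_top"
    using eventually_admissible
  proof eventually_elim
    case (elim c)
    have "(\<Sum>i=1..N. fps_nth Ht_fps (i - 1) * c powi (2 - int i)) = c * (\<Sum>k<N. fps_nth Ht_fps k * (1 / c) ^ k)"
      using elim by (intro sum_powi_shift) simp
    moreover have "Fring l r d g c = (mu r d 0 - mu r d 1) * c * Ht (1 / c)"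
      using elim by (intro Fring_eq_Ht) auto
    ultimately show ?case
      by (simp add: right_diff_distrib)
  qed
  have scale: "eventually (\<lambda>c. ?\<delta> c * (1 / c) ^ N = (mu r d 0 - mu r d 1) * c powi (1 - int N)) at_top"
    using eventually_gt_at_top[of 0] by eventually_elim (simp add: powi_one_minus)
  show ?thesis
    using remainder unfolding landau_o.big.in_cong[OF closed_form] landau_o.big.cong[OF scale] .
qed

end

theorem proposition3p18:
  fixes l :: nat and r :: "nat \<Rightarrow> nat" and d :: "nat \<Rightarrow> int" and g :: int
  assumes "l \<ge> 2"
    and "\<forall>k\<le>l. r k \<ge> 1"
    and "(\<Sum>k\<le>l. d k) = 0"
    and "g \<ge> 1"
  shows "\<exists>Fut :: nat \<Rightarrow> real.
     Fut 1 = 2 * piR l r ^ 2 * real (rV l r) * real (r 0) * real (r 1)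
               / (fact (rV l r - 1) * fact (rV l r + 1) * real (r 0 + r 1))
   \<and> Fut 1 > 0
   \<and> Fut 2 = 2 * real (r 0) * real (r 1) * piR l r ^ 2
               / (fact (rV l r - 1) * fact (rV l r + 2) * real (r 0 + r 1))
             * ((real (rV l r) + 2) * (real_of_int g - 1)
                + 2 * real (rV l r) * (real_of_int (d 0 + d 1) / real (r 0 + r 1)))
   \<and> (\<forall>N\<ge>1. (\<lambda>c. Fring l r d g c
                 - (mu r d 0 - mu r d 1) * (\<Sum>i=1..N. Fut i * c powi (2 - int i)))
             \<in> O[at_top](\<lambda>c. (mu r d 0 - mu r d 1) * c powi (1 - int N)))"
proof -
  interpret vertex_data l r d g
    using assms(1-3) by unfold_locales auto
  show ?thesis
    using Ht_fps_nth_0 Ht_fps_nth_0_pos Ht_fps_nth_Suc_0 Fring_asymptotic_expansion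
    by (intro exI[of _ "\<lambda>i. fps_nth Ht_fps (i - 1)"]) (simp add: numeral_2_eq_2)
qed

end
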